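(* For every prime power $q>2$ there is no linear $(q-1,q+1,q)$-AONT, i.e. no invertible $(q+1)\times(q+1)$ matrix over $\mathbb{F}_q$ all of whose $(q-1)\times(q-1)$ submatrices are invertible.
   Context: A linear $(t,s,q)$-AONT over $\mathbb{F}_q$ is given by an invertible $s\times s$ matrix $M$ over $\mathbb{F}_q$ (transform $(y_1,\dots,y_s)=(x_1,\dots,x_s)M^{-1}$); $M$ defines a linear $(t,s,q)$-AONT iff every $t\times t$ submatrix of $M$ is invertible. *)

theory Defs
  imports "Jordan_Normal_Form.DL_Submatrix"
begin

end

theory Submission
  imports Defs
begin

(* Jacobi's complementary minor theorem, in the direction needed: if every (q-1)x(q-1) submatrix
   of M is invertible, every 2x2 minor of N = M^-1 is nonzero. A vanishing 2x2 minor of N in rows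
   i, k and columns a, b yields a nonzero combination w of the columns a, b of N vanishing at i and
   k; then M w lies in the span of e_a and e_b, so the submatrix of M without rows a, b and
   columns i, k kills the restriction of w.
   But a (q+1)x(q+1) matrix N over F_q with all 2x2 minors nonzero is singular. The ratios of two
   rows are injective on columns, so by pigeonhole row 0 has a zero, at a unique column c0. The
   vector x with x_c0 = 0 and x_j = 1/N_0j otherwise is in the kernel: row 0 of N x is q = 0, and
   any other row is a sum of q distinct ratios, i.e. the sum of all elements of F_q, which is 0
   for q > 2. *)

lemma of_nat_card_UNIV_eq_0: "of_nat (card (UNIV :: 'a set)) = (0 :: 'a :: {field,finite})"
proof -
  have "(\<Sum>x\<in>(UNIV :: 'a set). x + 1) = (\<Sum>x\<in>UNIV. x)"
    by (rule sum.reindex_bij_witness[of _ "\<lambda>x. x - 1" "\<lambda>x. x + 1"]) auto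
  then show ?thesis
    by (simp add: sum.distrib)
qed

lemma sum_UNIV_field_eq_0:
  assumes "card (UNIV :: 'a set) > 2"
  shows "(\<Sum>x\<in>(UNIV :: 'a :: {field,finite} set). x) = 0"
proof -
  have "card {0 :: 'a, 1} \<le> 2"
    by (simp add: card_insert_if)
  then have "\<not> UNIV \<subseteq> {0 :: 'a, 1}"
    using card_mono[of "{0 :: 'a, 1}" UNIV] assms by auto
  then obtain a :: 'a where a: "a \<noteq> 0" "a \<noteq> 1"
    by blast
  have "(\<Sum>x\<in>(UNIV :: 'a set). a * x) = (\<Sum>x\<in>UNIV. x)"
    by (rule sum.reindex_bij_witness[of _ "\<lambda>x. x / a" "\<lambda>x. a * x"]) (use a in auto)
  then have "(a - 1) * (\<Sum>x\<in>(UNIV :: 'a set). x) = 0"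
    by (simp add: sum_distrib_left left_diff_distrib sum_subtractf)
  then show ?thesis
    using a by simp
qed

lemma sum_inj_on_card_UNIV_eq_0:
  fixes f :: "'b \<Rightarrow> 'a :: {field,finite}"
  assumes "finite S" "inj_on f S" "card S = card (UNIV :: 'a set)" "card (UNIV :: 'a set) > 2"
  shows "sum f S = 0"
proof -
  have "f ` S = UNIV"
    using assms(2,3) by (simp add: card_image card_eq_UNIV_imp_eq_UNIV)
  then have "sum f S = (\<Sum>x\<in>(UNIV :: 'a set). x)"
    using sum.reindex[OF assms(2), of id] by simp
  then show ?thesis
    using sum_UNIV_field_eq_0 assms(4) by simp
qed

lemma det2_eq_0_imp_kernel:
  fixes x1 y1 x2 y2 :: "'a :: field"
  assumes "x1 * y2 - y1 * x2 = 0"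
  shows "\<exists>l m. (l \<noteq> 0 \<or> m \<noteq> 0) \<and> l * x1 + m * y1 = 0 \<and> l * x2 + m * y2 = 0"
proof -
  consider "x1 \<noteq> 0 \<or> y1 \<noteq> 0" | "x2 \<noteq> 0 \<or> y2 \<noteq> 0" | "x1 = 0" "y1 = 0" "x2 = 0" "y2 = 0"
    by blast
  then show ?thesis
  proof cases
    case 1
    then show ?thesis
      using assms by (intro exI[of _ y1] exI[of _ "- x1"]) (auto simp: algebra_simps)
  next
    case 2
    then show ?thesis
      using assms by (intro exI[of _ y2] exI[of _ "- x2"]) (auto simp: algebra_simps)
  next
    case 3
    then show ?thesis
      by (intro exI[of _ 1] exI[of _ 0]) simp
  qed
qed

lemma invertible_mat_obtain_inverse:
  fixes A :: "'a :: semiring_1 mat"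
  assumes "A \<in> carrier_mat n n" "invertible_mat A"
  obtains B where "B \<in> carrier_mat n n" "A * B = 1\<^sub>m n" "B * A = 1\<^sub>m n"
proof -
  obtain B where AB: "A * B = 1\<^sub>m (dim_row A)" and BA: "B * A = 1\<^sub>m (dim_row B)"
    using assms(2) unfolding invertible_mat_def inverts_mat_def by blast
  have "dim_row B = n" "dim_col B = n"
    using assms(1) arg_cong[OF AB, of dim_col] arg_cong[OF BA, of dim_col] by auto
  then show thesis
    using that AB BA assms(1) by auto
qed

lemma invertible_mat_mult_vec_eq_0:
  fixes A :: "'a :: semiring_1 mat"
  assumes "A \<in> carrier_mat n n" "invertible_mat A" "v \<in> carrier_vec n" "A *\<^sub>v v = 0\<^sub>v n"
  shows "v = 0\<^sub>v n"
proof -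
  obtain B where B: "B \<in> carrier_mat n n" "B * A = 1\<^sub>m n"
    using invertible_mat_obtain_inverse[OF assms(1,2)] by metis
  have "v = (B * A) *\<^sub>v v"
    using B assms(3) by simp
  also have "\<dots> = B *\<^sub>v (A *\<^sub>v v)"
    using B assms by (intro assoc_mult_mat_vec)
  also have "\<dots> = 0\<^sub>v n"
    unfolding assms(4) using B by (intro eq_vecI) auto
  finally show ?thesis .
qed

lemma bij_betw_pick:
  assumes "finite C"
  shows "bij_betw (pick C) {..<card C} C"
proof (rule bij_betw_imageI)
  show "inj_on (pick C) {..<card C}"
    by (rule inj_onI) (metis lessThan_iff nat_neq_iff less_irrefl pick_mono)
  have "i \<in> pick C ` {..<card C}" if "i \<in> C" for i
  proof -
    have "card {a\<in>C. a < i} < card C"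
      using that assms by (intro psubset_card_mono) auto
    then show ?thesis
      using pick_card_in_set[OF that] by force
  qed
  then show "pick C ` {..<card C} = C"
    using pick_in_set by auto
qed

lemma submatrix_mult_vec_restrict:
  assumes M: "M \<in> carrier_mat nr nc" and R: "R \<subseteq> {..<nr}" and C: "C \<subseteq> {..<nc}"
    and v: "v \<in> carrier_vec nc" and supp: "\<And>j. j < nc \<Longrightarrow> j \<notin> C \<Longrightarrow> v $ j = 0"
    and t: "t < card R"
  shows "(submatrix M R C *\<^sub>v vec (card C) (\<lambda>u. v $ pick C u)) $ t = (M *\<^sub>v v) $ pick R t"
proof -
  have fC: "finite C"
    using C finite_subset by blast
  have RC: "{i. i < nr \<and> i \<in> R} = R" "{j. j < nc \<and> j \<in> C} = C"
    using R C by auto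
  have "pick R t \<in> R"
    using t by (intro pick_in_set) simp
  then have pR: "pick R t < nr"
    using R by auto
  have "(submatrix M R C *\<^sub>v vec (card C) (\<lambda>u. v $ pick C u)) $ t
      = (\<Sum>u<card C. M $$ (pick R t, pick C u) * v $ pick C u)"
    using M t by (simp add: dim_submatrix RC submatrix_index scalar_prod_def lessThan_atLeast0)
  also have "\<dots> = (\<Sum>c\<in>C. M $$ (pick R t, c) * v $ c)"
    using sum.reindex_bij_betw[OF bij_betw_pick[OF fC]] .
  also have "\<dots> = (\<Sum>c<nc. M $$ (pick R t, c) * v $ c)"
    using C supp fC by (intro sum.mono_neutral_left) auto
  also have "\<dots> = (M *\<^sub>v v) $ pick R t"
    using M v pR by (simp add: scalar_prod_def lessThan_atLeast0)
  finally show ?thesis .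
qed

lemma vec_eq_0_if_restrict_eq_0:
  assumes v: "v \<in> carrier_vec n" and C: "C \<subseteq> {..<n}"
    and supp: "\<And>j. j < n \<Longrightarrow> j \<notin> C \<Longrightarrow> v $ j = 0"
    and restrict: "vec (card C) (\<lambda>u. v $ pick C u) = 0\<^sub>v (card C)"
  shows "v = 0\<^sub>v n"
proof (rule eq_vecI)
  fix j assume "j < dim_vec (0\<^sub>v n)"
  then have j: "j < n"
    by simp
  show "v $ j = 0\<^sub>v n $ j"
  proof (cases "j \<in> C")
    case True
    have "finite C"
      using C finite_subset by blast
    then have "j \<in> pick C ` {..<card C}"
      using bij_betw_imp_surj_on[OF bij_betw_pick] True by blast
    then obtain u where u: "u < card C" "j = pick C u"
      by blast
    then have "v $ j = vec (card C) (\<lambda>u. v $ pick C u) $ u"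
      by simp
    then show ?thesis
      using restrict u j by simp
  next
    case False
    then show ?thesis
      using j supp by simp
  qed
qed (use v in simp)

lemma vec_eq_0_if_minors_invertible:
  fixes M :: "'a :: field mat"
  assumes M: "M \<in> carrier_mat n n"
    and minors: "\<forall>I J. I \<subseteq> {..<n} \<and> J \<subseteq> {..<n} \<and> card I = n - 2 \<and> card J = n - 2 \<longrightarrow>
                   invertible_mat (submatrix M I J)"
    and ik: "i < n" "k < n" "i \<noteq> k" and ab: "a < n" "b < n" "a \<noteq> b"
    and w: "w \<in> carrier_vec n" "w $ i = 0" "w $ k = 0"
    and Mw: "\<And>r. r < n \<Longrightarrow> r \<notin> {a, b} \<Longrightarrow> (M *\<^sub>v w) $ r = 0"
  shows "w = 0\<^sub>v n"
proof -
  define R where "R = {..<n} - {a, b}"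
  define C where "C = {..<n} - {i, k}"
  define w' where "w' = vec (card C) (\<lambda>u. w $ pick C u)"
  have RC: "R \<subseteq> {..<n}" "C \<subseteq> {..<n}"
    by (auto simp: R_def C_def)
  have "card R = n - card {a, b}" "card C = n - card {i, k}"
    unfolding R_def C_def using ab ik by (simp_all add: card_Diff_subset)
  then have card_RC: "card R = n - 2" "card C = n - 2"
    using ab(3) ik(3) by simp_all
  have "{r. r < dim_row M \<and> r \<in> R} = R" "{c. c < dim_col M \<and> c \<in> C} = C"
    using RC M by auto
  then have "dim_row (submatrix M R C) = n - 2" "dim_col (submatrix M R C) = n - 2"
    by (simp_all only: dim_submatrix card_RC)
  then have S: "submatrix M R C \<in> carrier_mat (n - 2) (n - 2)"
    by blast
  have "submatrix M R C *\<^sub>v w' = 0\<^sub>v (n - 2)"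
  proof (rule eq_vecI)
    fix t assume "t < dim_vec (0\<^sub>v (n - 2))"
    then have t: "t < card R"
      using card_RC by simp
    have "(submatrix M R C *\<^sub>v w') $ t = (M *\<^sub>v w) $ pick R t"
      unfolding w'_def
      by (rule submatrix_mult_vec_restrict[OF M RC(1,2) w(1) _ t]) (auto simp: C_def w)
    also have "\<dots> = 0"
    proof (rule Mw)
      have "pick R t \<in> R"
        using t by (intro pick_in_set) simp
      then show "pick R t < n" "pick R t \<notin> {a, b}"
        by (auto simp: R_def)
    qed
    finally show "(submatrix M R C *\<^sub>v w') $ t = 0\<^sub>v (n - 2) $ t"
      using t card_RC by simp
  qed (use carrier_matD(1)[OF S] in simp)
  moreover have "invertible_mat (submatrix M R C)"
    using RC card_RC by (intro minors[rule_format]) simp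
  moreover have "w' \<in> carrier_vec (n - 2)"
    using card_RC by (simp add: w'_def)
  ultimately have "w' = 0\<^sub>v (n - 2)"
    using invertible_mat_mult_vec_eq_0[OF S] by blast
  then show ?thesis
    using w RC(2) card_RC(2) unfolding w'_def
    by (intro vec_eq_0_if_restrict_eq_0[of w n C]) (auto simp: C_def)
qed

definition all_2x2_minors_nonzero :: "'a :: comm_ring_1 mat \<Rightarrow> bool" where
  "all_2x2_minors_nonzero N \<longleftrightarrow>
    (\<forall>i k a b. i < dim_row N \<longrightarrow> k < dim_row N \<longrightarrow> i \<noteq> k \<longrightarrow>
       a < dim_col N \<longrightarrow> b < dim_col N \<longrightarrow> a \<noteq> b \<longrightarrow>
       N $$ (i, a) * N $$ (k, b) - N $$ (i, b) * N $$ (k, a) \<noteq> 0)"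

lemma inverse_all_2x2_minors_nonzero:
  fixes M N :: "'a :: field mat"
  assumes M: "M \<in> carrier_mat n n" and N: "N \<in> carrier_mat n n" and MN: "M * N = 1\<^sub>m n"
    and minors: "\<forall>I J. I \<subseteq> {..<n} \<and> J \<subseteq> {..<n} \<and> card I = n - 2 \<and> card J = n - 2 \<longrightarrow>
                   invertible_mat (submatrix M I J)"
  shows "all_2x2_minors_nonzero N"
  unfolding all_2x2_minors_nonzero_def
proof (intro allI impI notI)
  fix i k a b
  assume ik: "i < dim_row N" "k < dim_row N" "i \<noteq> k" and ab: "a < dim_col N" "b < dim_col N" "a \<noteq> b"
    and "N $$ (i, a) * N $$ (k, b) - N $$ (i, b) * N $$ (k, a) = 0"
  then obtain l m where lm: "l \<noteq> 0 \<or> m \<noteq> 0"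
    "l * N $$ (i, a) + m * N $$ (i, b) = 0" "l * N $$ (k, a) + m * N $$ (k, b) = 0"
    using det2_eq_0_imp_kernel by blast
  define w where "w = l \<cdot>\<^sub>v col N a + m \<cdot>\<^sub>v col N b"
  have w: "w \<in> carrier_vec n" "w $ i = 0" "w $ k = 0"
    using N ik ab lm by (auto simp: w_def)
  have "M *\<^sub>v col N c = unit_vec n c" if "c < n" for c
    using col_mult2[OF M N that] MN that by simp
  then have Mw: "M *\<^sub>v w = l \<cdot>\<^sub>v unit_vec n a + m \<cdot>\<^sub>v unit_vec n b"
    using M N ab by (simp add: w_def mult_add_distrib_mat_vec mult_mat_vec)
  have "w = 0\<^sub>v n"
    using M minors ik ab N w
    by (intro vec_eq_0_if_minors_invertible[of M n i k a b]) (auto simp: Mw)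
  then have "M *\<^sub>v w = 0\<^sub>v n"
    using M by (intro eq_vecI) auto
  then have "(M *\<^sub>v w) $ a = 0" "(M *\<^sub>v w) $ b = 0"
    using N ab by auto
  then show False
    using lm(1) N ab by (simp add: Mw)
qed

lemma all_2x2_minors_nonzero_inj_on_ratio:
  fixes N :: "'a :: field mat"
  assumes "all_2x2_minors_nonzero N" "r0 < dim_row N" "r < dim_row N" "r0 \<noteq> r"
    and "S \<subseteq> {..<dim_col N}" "\<And>j. j \<in> S \<Longrightarrow> N $$ (r0, j) \<noteq> 0"
  shows "inj_on (\<lambda>j. N $$ (r, j) / N $$ (r0, j)) S"
proof (rule inj_onI, rule ccontr)
  fix j j' assume j: "j \<in> S" "j' \<in> S" "j \<noteq> j'"
    and "N $$ (r, j) / N $$ (r0, j) = N $$ (r, j') / N $$ (r0, j')"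
  then have "N $$ (r0, j) * N $$ (r, j') - N $$ (r0, j') * N $$ (r, j) = 0"
    using assms(6) by (simp add: field_simps)
  moreover have "j < dim_col N" "j' < dim_col N"
    using assms(5) j by auto
  then have "N $$ (r0, j) * N $$ (r, j') - N $$ (r0, j') * N $$ (r, j) \<noteq> 0"
    using assms(1-4) j(3) unfolding all_2x2_minors_nonzero_def by blast
  ultimately show False
    by simp
qed

lemma all_2x2_minors_nonzero_row_has_zero:
  fixes N :: "'a :: {field,finite} mat"
  assumes N: "all_2x2_minors_nonzero N" and "2 \<le> dim_row N" "card (UNIV :: 'a set) < dim_col N"
  shows "\<exists>c < dim_col N. N $$ (0, c) = 0"
proof (rule ccontr)
  assume "\<not> ?thesis"
  then have "N $$ (0, j) \<noteq> 0" if "j \<in> {..<dim_col N}" for j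
    using that by simp
  then have "inj_on (\<lambda>j. N $$ (1, j) / N $$ (0, j)) {..<dim_col N}"
    using assms(2) by (intro all_2x2_minors_nonzero_inj_on_ratio[OF N]) simp_all
  then have "card {..<dim_col N} \<le> card (UNIV :: 'a set)"
    by (rule card_inj_on_le) simp_all
  then show False
    using assms(3) by simp
qed

lemma all_2x2_minors_nonzero_row_unique_zero:
  fixes N :: "'a :: field mat"
  assumes "all_2x2_minors_nonzero N" "2 \<le> dim_row N" "r < dim_row N"
    and "c < dim_col N" "N $$ (r, c) = 0" "j < dim_col N" "j \<noteq> c"
  shows "N $$ (r, j) \<noteq> 0"
proof -
  define r' where "r' = (if r = 0 then 1 else 0 :: nat)"
  have "r' < dim_row N" "r \<noteq> r'"
    using assms(2) by (auto simp: r'_def)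
  then have "N $$ (r, c) * N $$ (r', j) - N $$ (r, j) * N $$ (r', c) \<noteq> 0"
    using assms unfolding all_2x2_minors_nonzero_def by blast
  then show ?thesis
    using assms(5) by auto
qed

lemma all_2x2_minors_nonzero_kernel:
  fixes N :: "'a :: {field,finite} mat"
  assumes N: "all_2x2_minors_nonzero N" "N \<in> carrier_mat n n"
    and n: "n = card (UNIV :: 'a set) + 1" and q: "card (UNIV :: 'a set) > 2"
  shows "\<exists>x \<in> carrier_vec n. x \<noteq> 0\<^sub>v n \<and> N *\<^sub>v x = 0\<^sub>v n"
proof -
  have dims: "dim_row N = n" "dim_col N = n"
    using N(2) by auto
  then have rows: "2 \<le> dim_row N" and cols: "card (UNIV :: 'a set) < dim_col N"
    using n q by simp_all
  obtain c0 where c0: "c0 < n" "N $$ (0, c0) = 0"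
    using all_2x2_minors_nonzero_row_has_zero[OF N(1) rows cols] dims by auto
  have nz: "N $$ (0, j) \<noteq> 0" if "j < n" "j \<noteq> c0" for j
    using all_2x2_minors_nonzero_row_unique_zero[OF N(1) rows _ _ c0(2)] dims c0(1) that by simp
  define x where "x = vec n (\<lambda>j. if j = c0 then 0 else 1 / N $$ (0, j))"
  have "x \<noteq> 0\<^sub>v n"
  proof
    define j where "j = (if c0 = 0 then 1 else 0 :: nat)"
    have j: "j < n" "j \<noteq> c0"
      using n q by (auto simp: j_def)
    assume "x = 0\<^sub>v n"
    then have "x $ j = 0"
      using j by simp
    then show False
      using nz[OF j] j by (simp add: x_def)
  qed
  moreover have "N *\<^sub>v x = 0\<^sub>v n"
  proof (rule eq_vecI)
    fix r assume "r < dim_vec (0\<^sub>v n)"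
    then have r: "r < n"
      by simp
    have "(N *\<^sub>v x) $ r = (\<Sum>j<n. N $$ (r, j) * x $ j)"
      using N(2) r by (simp add: x_def scalar_prod_def lessThan_atLeast0)
    also have "\<dots> = (\<Sum>j\<in>{..<n} - {c0}. N $$ (r, j) / N $$ (0, j))"
      by (intro sum.mono_neutral_cong_right) (auto simp: x_def divide_inverse)
    also have "\<dots> = 0"
    proof (cases "r = 0")
      case True
      have "(\<Sum>j\<in>{..<n} - {c0}. N $$ (r, j) / N $$ (0, j)) = of_nat (card ({..<n} - {c0}))"
        using True nz by simp
      also have "\<dots> = of_nat (card (UNIV :: 'a set))"
        using c0 n by simp
      finally show ?thesis
        using of_nat_card_UNIV_eq_0 by simp
    next
      case False
      have "inj_on (\<lambda>j. N $$ (r, j) / N $$ (0, j)) ({..<n} - {c0})"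
        using N(2) n r False nz by (intro all_2x2_minors_nonzero_inj_on_ratio[OF N(1)]) auto
      then show ?thesis
        using c0 n q by (intro sum_inj_on_card_UNIV_eq_0) auto
    qed
    finally show "(N *\<^sub>v x) $ r = 0\<^sub>v n $ r"
      using r by simp
  qed (use N(2) in simp)
  ultimately show ?thesis
    by (auto simp: x_def)
qed

theorem corollary2p25:
  fixes q :: nat
  assumes "q = card (UNIV :: 'a::{field,finite} set)" and "q > 2"
  shows "\<not> (\<exists>M :: 'a mat. M \<in> carrier_mat (q + 1) (q + 1) \<and> invertible_mat M \<and>
            (\<forall>I J. I \<subseteq> {..<q + 1} \<and> J \<subseteq> {..<q + 1} \<and>
                   card I = q - 1 \<and> card J = q - 1 \<longrightarrow>
                   invertible_mat (submatrix M I J)))"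
proof
  assume "\<exists>M :: 'a mat. M \<in> carrier_mat (q + 1) (q + 1) \<and> invertible_mat M \<and>
            (\<forall>I J. I \<subseteq> {..<q + 1} \<and> J \<subseteq> {..<q + 1} \<and>
                   card I = q - 1 \<and> card J = q - 1 \<longrightarrow>
                   invertible_mat (submatrix M I J))"
  then obtain M :: "'a mat" where M: "M \<in> carrier_mat (q + 1) (q + 1)" "invertible_mat M"
    and minors: "\<forall>I J. I \<subseteq> {..<q + 1} \<and> J \<subseteq> {..<q + 1} \<and> card I = q - 1 \<and> card J = q - 1 \<longrightarrow>
                   invertible_mat (submatrix M I J)"
    by blast
  obtain N where N: "N \<in> carrier_mat (q + 1) (q + 1)" and MN: "M * N = 1\<^sub>m (q + 1)"
    and NM: "N * M = 1\<^sub>m (q + 1)"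
    using invertible_mat_obtain_inverse[OF M] by metis
  have "all_2x2_minors_nonzero N"
    using minors by (intro inverse_all_2x2_minors_nonzero[OF M(1) N MN]) simp
  then have "\<exists>x \<in> carrier_vec (q + 1). x \<noteq> 0\<^sub>v (q + 1) \<and> N *\<^sub>v x = 0\<^sub>v (q + 1)"
    using N assms by (intro all_2x2_minors_nonzero_kernel) auto
  then obtain x where x: "x \<in> carrier_vec (q + 1)" "x \<noteq> 0\<^sub>v (q + 1)" "N *\<^sub>v x = 0\<^sub>v (q + 1)"
    by blast
  have "invertible_mat N"
    using N MN NM M(1) unfolding invertible_mat_def inverts_mat_def by auto
  then show False
    using invertible_mat_mult_vec_eq_0[OF N] x by blast
qed

end
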